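(* Let $(X_n)_{n\ge0}$ be a discrete-time Markov chain on a finite state space $\Sigma$ with transition matrix $P$, initial distribution $\nu$, mixing time $T$ and invariant distribution $\pi$. Then for every $n\ge1$, every $f:\Sigma\to[-1,1]$ with $\pi(f)=0$ and $\pi(f^2)\le\sigma^2$, and every $\gamma\in(0,\sigma^2\wedge\frac12]$, $$\mathbb P\Big[\sum_{i<n}f(X_i)\ge n\gamma\Big]\le4\exp\Big\{-\Big\lfloor\frac n{k(\gamma)T}-1\Big\rfloor\frac{\gamma^2}{6\sigma^2}\Big\},$$ where $k(\gamma)=-\log_2(\pi_\star\gamma^2/(6\sigma^2))$ and $\pi_\star=\min_{x\in\Sigma}\pi(x)$.
   Context: The mixing time is $T=\min\{n\ge0:\max_{x\in\Sigma}\|P^n(x,\cdot)-\pi\|_{TV}\le1/4\}$ with $\|\nu-\nu'\|_{TV}=\frac12\sum_x|\nu(x)-\nu'(x)|$. $\pi(f)=\sum_x\pi(x)f(x)$. *)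

theory Defs
  imports Complex_Main
begin

definition stochastic :: "('a::finite \<Rightarrow> 'a \<Rightarrow> real) \<Rightarrow> bool" where
  "stochastic P \<longleftrightarrow> (\<forall>x y. 0 \<le> P x y) \<and> (\<forall>x. (\<Sum>y\<in>UNIV. P x y) = 1)"

definition distribution :: "('a::finite \<Rightarrow> real) \<Rightarrow> bool" where
  "distribution \<mu> \<longleftrightarrow> (\<forall>x. 0 \<le> \<mu> x) \<and> (\<Sum>x\<in>UNIV. \<mu> x) = 1"

definition invariant :: "('a::finite \<Rightarrow> 'a \<Rightarrow> real) \<Rightarrow> ('a \<Rightarrow> real) \<Rightarrow> bool" where
  "invariant P \<pi> \<longleftrightarrow> distribution \<pi> \<and> (\<forall>y. (\<Sum>x\<in>UNIV. \<pi> x * P x y) = \<pi> y)"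

fun mpow :: "('a::finite \<Rightarrow> 'a \<Rightarrow> real) \<Rightarrow> nat \<Rightarrow> 'a \<Rightarrow> 'a \<Rightarrow> real" where
  "mpow P 0 x y = (if x = y then 1 else 0)"
| "mpow P (Suc n) x y = (\<Sum>z\<in>UNIV. mpow P n x z * P z y)"

definition tv_dist :: "('a::finite \<Rightarrow> real) \<Rightarrow> ('a \<Rightarrow> real) \<Rightarrow> real" where
  "tv_dist \<mu> \<mu>' = (1/2) * (\<Sum>x\<in>UNIV. \<bar>\<mu> x - \<mu>' x\<bar>)"

definition mixes_within :: "('a::finite \<Rightarrow> 'a \<Rightarrow> real) \<Rightarrow> ('a \<Rightarrow> real) \<Rightarrow> nat \<Rightarrow> bool" where
  "mixes_within P \<pi> n \<longleftrightarrow> Max (range (\<lambda>x. tv_dist (mpow P n x) \<pi>)) \<le> 1/4"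

definition mixing_time :: "('a::finite \<Rightarrow> 'a \<Rightarrow> real) \<Rightarrow> ('a \<Rightarrow> real) \<Rightarrow> nat" where
  "mixing_time P \<pi> = (LEAST n. mixes_within P \<pi> n)"

definition path_prob :: "('a \<Rightarrow> real) \<Rightarrow> ('a \<Rightarrow> 'a \<Rightarrow> real) \<Rightarrow> 'a list \<Rightarrow> real" where
  "path_prob \<nu> P xs = (case xs of [] \<Rightarrow> 1
     | x # _ \<Rightarrow> \<nu> x * (\<Prod>i<length xs - 1. P (xs ! i) (xs ! Suc i)))"

text \<open>P[(X_0,...,X_{n-1}) satisfies E] for the Markov chain with initial law \<nu>, kernel P.\<close>
definition chain_prob :: "('a::finite \<Rightarrow> real) \<Rightarrow> ('a \<Rightarrow> 'a \<Rightarrow> real) \<Rightarrow> nat \<Rightarrow> ('a list \<Rightarrow> bool) \<Rightarrow> real" where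
  "chain_prob \<nu> P n E = (\<Sum>xs\<in>{xs. length xs = n \<and> E xs}. path_prob \<nu> P xs)"

end

theory Submission
  imports Defs
begin

text \<open>Chernoff bound by blocking. With \<open>L = \<lceil>k\<rceil> T\<close> and \<open>\<mu> = \<gamma> / (2 \<sigma>\<^sup>2)\<close>, on the deviation event
  the exponents \<open>\<mu> \<Sum>\<^sub>i\<^sub>\<equiv>\<^sub>r (f(X\<^sub>i) - \<gamma>)\<close> of the \<open>L\<close> residue classes \<open>r\<close> mod \<open>L\<close> have nonnegative sum,
  so by \<open>exp s \<ge> 1 + s\<close> the indicator is at most the average over \<open>r\<close> of
  \<open>\<Prod>\<^sub>i\<^sub>\<equiv>\<^sub>r exp (\<mu> (f(X\<^sub>i) - \<gamma>))\<close>. Within one class consecutive factors are \<open>L\<close> steps apart;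
  since the total variation distance halves with every further mixing time, the choice of \<open>k\<close>
  gives \<open>P\<^sup>L(x, y) \<le> (1 + \<gamma>\<^sup>2/(12\<sigma>\<^sup>2)) \<pi>(y)\<close>, so each factor after the first costs at most
  \<open>(1 + \<gamma>\<^sup>2/(12\<sigma>\<^sup>2)) \<pi>(exp (\<mu> (f - \<gamma>))) \<le> exp (-\<gamma>\<^sup>2/(4\<sigma>\<^sup>2))\<close>, the last step by
  \<open>exp u \<le> 1 + u + 2u\<^sup>2/3\<close> for \<open>|u| \<le> 1/2\<close>.\<close>

lemma finite_lists_length_eq_UNIV: "finite {xs :: 'a::finite list. length xs = n}"
  using finite_lists_length_eq[of "UNIV :: 'a set" n] by simp

lemma path_prob_nonneg: "distribution \<nu> \<Longrightarrow> stochastic P \<Longrightarrow> 0 \<le> path_prob \<nu> P xs"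
  by (cases xs) (auto simp: path_prob_def distribution_def stochastic_def intro!: prod_nonneg mult_nonneg_nonneg)

lemma path_prob_Cons: "path_prob \<mu> P (x # ys) = \<mu> x * path_prob (P x) P ys"
proof (cases ys)
  case Nil then show ?thesis by (simp add: path_prob_def)
next
  case (Cons y zs)
  show ?thesis unfolding Cons path_prob_def
    by (simp add: prod.lessThan_Suc_shift del: prod.lessThan_Suc)
qed

lemma lists_length_Suc_eq_image:
  "{xs. length xs = Suc n} = (\<lambda>(x, ys). x # ys) ` (UNIV \<times> {ys. length ys = n})"
proof (rule set_eqI, rule iffI)
  fix xs :: "'b list" assume "xs \<in> {xs. length xs = Suc n}"
  then obtain x ys where "xs = x # ys" "length ys = n" by (cases xs) auto
  then show "xs \<in> (\<lambda>(x, ys). x # ys) ` (UNIV \<times> {ys. length ys = n})" by force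
qed auto

definition path_expectation ::
    "('a::finite \<Rightarrow> real) \<Rightarrow> ('a \<Rightarrow> 'a \<Rightarrow> real) \<Rightarrow> nat \<Rightarrow> ('a list \<Rightarrow> real) \<Rightarrow> real" where
  "path_expectation \<mu> P n g = (\<Sum>xs\<in>{xs. length xs = n}. path_prob \<mu> P xs * g xs)"

lemma path_expectation_0: "path_expectation \<mu> P 0 g = g []"
proof -
  have "{xs :: 'a list. length xs = 0} = {[]}" by auto
  then show ?thesis by (simp add: path_expectation_def path_prob_def)
qed

lemma path_expectation_Suc:
  "path_expectation \<mu> P (Suc n) g = (\<Sum>x\<in>UNIV. \<mu> x * path_expectation (P x) P n (\<lambda>ys. g (x # ys)))"
proof -
  have inj: "inj_on (\<lambda>(x, ys). x # ys) (UNIV \<times> {ys :: 'a list. length ys = n})"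
    by (auto simp: inj_on_def)
  have "path_expectation \<mu> P (Suc n) g
      = (\<Sum>p\<in>UNIV \<times> {ys. length ys = n}. path_prob \<mu> P (fst p # snd p) * g (fst p # snd p))"
    unfolding path_expectation_def lists_length_Suc_eq_image
    by (subst sum.reindex[OF inj]) (simp add: case_prod_beta)
  also have "\<dots> = (\<Sum>x\<in>UNIV. \<Sum>ys\<in>{ys. length ys = n}. path_prob \<mu> P (x # ys) * g (x # ys))"
    by (simp add: sum.cartesian_product case_prod_beta)
  also have "\<dots> = (\<Sum>x\<in>UNIV. \<mu> x * path_expectation (P x) P n (\<lambda>ys. g (x # ys)))"
    unfolding path_expectation_def path_prob_Cons by (simp add: sum_distrib_left mult.assoc)
  finally show ?thesis .
qed

lemma path_expectation_cmult: "path_expectation \<mu> P n (\<lambda>xs. c * h xs) = c * path_expectation \<mu> P n h"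
  unfolding path_expectation_def by (simp add: sum_distrib_left algebra_simps)

text \<open>\<open>kernel_prod P \<phi> n x\<close> is the expectation of \<open>\<Prod>i<n. \<phi> i (X\<^sub>i)\<close> for the chain started at \<open>x\<close>.\<close>

fun kernel_prod :: "('a::finite \<Rightarrow> 'a \<Rightarrow> real) \<Rightarrow> (nat \<Rightarrow> 'a \<Rightarrow> real) \<Rightarrow> nat \<Rightarrow> 'a \<Rightarrow> real" where
  "kernel_prod P \<phi> 0 x = 1"
| "kernel_prod P \<phi> (Suc n) x = \<phi> 0 x * (\<Sum>y\<in>UNIV. P x y * kernel_prod P (\<lambda>i. \<phi> (Suc i)) n y)"

lemma path_expectation_prod:
  assumes "stochastic P" and "sum \<mu> UNIV = 1"
  shows "path_expectation \<mu> P n (\<lambda>xs. \<Prod>i<n. \<phi> i (xs ! i)) = (\<Sum>x\<in>UNIV. \<mu> x * kernel_prod P \<phi> n x)"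
  using assms(2)
proof (induction n arbitrary: \<mu> \<phi>)
  case 0
  then show ?case by (simp add: path_expectation_0)
next
  case (Suc n)
  have rows: "sum (P x) UNIV = 1" for x using assms(1) by (simp add: stochastic_def)
  have "path_expectation \<mu> P (Suc n) (\<lambda>xs. \<Prod>i<Suc n. \<phi> i (xs ! i))
     = (\<Sum>x\<in>UNIV. \<mu> x * path_expectation (P x) P n (\<lambda>ys. \<phi> 0 x * (\<Prod>i<n. \<phi> (Suc i) (ys ! i))))"
    by (simp add: path_expectation_Suc prod.lessThan_Suc_shift del: prod.lessThan_Suc)
  also have "\<dots> = (\<Sum>x\<in>UNIV. \<mu> x * (\<phi> 0 x * (\<Sum>y\<in>UNIV. P x y * kernel_prod P (\<lambda>i. \<phi> (Suc i)) n y)))"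
    using Suc.IH[OF rows, of _ "\<lambda>i. \<phi> (Suc i)"] by (simp add: path_expectation_cmult)
  finally show ?case by simp
qed

lemma chain_prob_le_1:
  assumes "stochastic P" and "distribution \<nu>"
  shows "chain_prob \<nu> P n E \<le> 1"
proof -
  have "chain_prob \<nu> P n E \<le> (\<Sum>xs\<in>{xs. length xs = n}. path_prob \<nu> P xs)"
    unfolding chain_prob_def
    by (rule sum_mono2[OF finite_lists_length_eq_UNIV]) (use path_prob_nonneg[OF assms(2,1)] in auto)
  also have "\<dots> = path_expectation \<nu> P n (\<lambda>xs. \<Prod>i<n. (\<lambda>i x. 1) i (xs ! i))"
    unfolding path_expectation_def by simp
  also have "\<dots> = (\<Sum>x\<in>UNIV. \<nu> x * kernel_prod P (\<lambda>i x. 1) n x)"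
    using assms by (intro path_expectation_prod) (simp_all add: distribution_def)
  also have "\<dots> = 1"
  proof -
    have "kernel_prod P (\<lambda>i x. 1) m x = 1" for m x
      using assms(1) by (induction m arbitrary: x) (simp_all add: stochastic_def)
    then show ?thesis using assms(2) by (simp add: distribution_def)
  qed
  finally show ?thesis .
qed

lemma mpow_add: "mpow P (m + n) x y = (\<Sum>z\<in>UNIV. mpow P m x z * mpow P n z y)"
proof (induction n arbitrary: y)
  case 0
  show ?case by (simp add: if_distrib cong: if_cong)
next
  case (Suc n)
  have "mpow P (m + Suc n) x y = (\<Sum>w\<in>UNIV. (\<Sum>z\<in>UNIV. mpow P m x z * mpow P n z w) * P w y)"
    by (simp add: Suc.IH)
  also have "\<dots> = (\<Sum>z\<in>UNIV. mpow P m x z * (\<Sum>w\<in>UNIV. mpow P n z w * P w y))"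
    by (simp add: sum_distrib_left sum_distrib_right mult.assoc) (rule sum.swap)
  finally show ?case by simp
qed

lemma mpow_1: "mpow P 1 x y = P x y"
proof -
  have "mpow P (Suc 0) x y = (\<Sum>z\<in>UNIV. if x = z then P z y else 0)"
    by (simp only: mpow.simps, intro sum.cong) auto
  then show ?thesis by simp
qed

lemma mpow_Suc_left: "mpow P (Suc n) x y = (\<Sum>z\<in>UNIV. P x z * mpow P n z y)"
  using mpow_add[of P 1 n x y] by (simp only: mpow_1 plus_1_eq_Suc)

lemma sum_mult_sum_mpow:
  "(\<Sum>y\<in>UNIV. P x y * (\<Sum>z\<in>UNIV. mpow P m y z * w z)) = (\<Sum>z\<in>UNIV. mpow P (Suc m) x z * w z)"
proof -
  have "(\<Sum>y\<in>UNIV. P x y * (\<Sum>z\<in>UNIV. mpow P m y z * w z))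
      = (\<Sum>z\<in>UNIV. \<Sum>y\<in>UNIV. P x y * mpow P m y z * w z)"
    by (simp add: sum_distrib_left mult.assoc) (rule sum.swap)
  also have "\<dots> = (\<Sum>z\<in>UNIV. mpow P (Suc m) x z * w z)"
    by (simp only: mpow_Suc_left sum_distrib_right)
  finally show ?thesis .
qed

lemma mpow_nonneg: "stochastic P \<Longrightarrow> 0 \<le> mpow P n x y"
  by (induction n arbitrary: y) (auto simp: stochastic_def intro!: sum_nonneg)

lemma mpow_row_sum: "stochastic P \<Longrightarrow> (\<Sum>y\<in>UNIV. mpow P n x y) = 1"
proof (induction n)
  case 0 then show ?case by simp
next
  case (Suc n)
  have "(\<Sum>y\<in>UNIV. mpow P (Suc n) x y) = (\<Sum>z\<in>UNIV. mpow P n x z * (\<Sum>y\<in>UNIV. P z y))"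
    by (simp add: sum_distrib_left) (rule sum.swap)
  also have "\<dots> = 1" using Suc by (simp add: stochastic_def)
  finally show ?case .
qed

lemma invariant_mpow: "invariant P \<pi> \<Longrightarrow> (\<Sum>x\<in>UNIV. \<pi> x * mpow P n x y) = \<pi> y"
proof (induction n arbitrary: y)
  case 0 then show ?case by (simp add: if_distrib cong: if_cong)
next
  case (Suc n)
  have "(\<Sum>x\<in>UNIV. \<pi> x * mpow P (Suc n) x y) = (\<Sum>z\<in>UNIV. (\<Sum>x\<in>UNIV. \<pi> x * mpow P n x z) * P z y)"
    by (simp add: sum_distrib_left sum_distrib_right mult.assoc) (rule sum.swap)
  also have "\<dots> = \<pi> y" using Suc by (simp add: invariant_def)
  finally show ?case .
qed

lemma kernel_prod_nonneg:
  assumes "stochastic P" and "\<And>i x. 0 \<le> \<phi> i x"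
  shows "0 \<le> kernel_prod P \<phi> n x"
  using assms(2)
proof (induction n arbitrary: \<phi> x)
  case 0 then show ?case by simp
next
  case (Suc n)
  have "0 \<le> kernel_prod P (\<lambda>i. \<phi> (Suc i)) n y" for y
    by (rule Suc.IH) (rule Suc.prems)
  then have "0 \<le> (\<Sum>y\<in>UNIV. P x y * kernel_prod P (\<lambda>i. \<phi> (Suc i)) n y)"
    using assms(1) by (intro sum_nonneg mult_nonneg_nonneg) (auto simp: stochastic_def)
  then show ?case using Suc.prems[of 0 x] by simp
qed

lemma kernel_prod_skip:
  assumes "stochastic P" and "m \<le> n" and "\<And>i x. i < m \<Longrightarrow> \<phi> i x = 1"
  shows "kernel_prod P \<phi> n x = (\<Sum>y\<in>UNIV. mpow P m x y * kernel_prod P (\<lambda>i. \<phi> (i + m)) (n - m) y)"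
  using assms(2,3)
proof (induction m arbitrary: \<phi> n x)
  case 0
  have "(\<Sum>y\<in>UNIV. mpow P 0 x y * kernel_prod P (\<lambda>i. \<phi> (i + 0)) (n - 0) y)
      = (\<Sum>y\<in>UNIV. if x = y then kernel_prod P \<phi> n y else 0)"
    by (intro sum.cong) auto
  then show ?case by simp
next
  case (Suc m)
  obtain n' where n': "n = Suc n'" "m \<le> n'" using Suc.prems(1) by (cases n) auto
  have "kernel_prod P (\<lambda>i. \<phi> (Suc i)) n' y
      = (\<Sum>z\<in>UNIV. mpow P m y z * kernel_prod P (\<lambda>i. \<phi> (i + Suc m)) (n - Suc m) z)" for y
    using Suc.IH[of n' "\<lambda>i. \<phi> (Suc i)"] Suc.prems(2) n' by simp
  moreover have "\<phi> 0 x = 1" by (rule Suc.prems(2)) simp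
  ultimately show ?case using n' by (simp add: sum_mult_sum_mpow)
qed

lemma kernel_prod_ones:
  assumes "stochastic P" and "\<And>i x. i < n \<Longrightarrow> \<phi> i x = 1"
  shows "kernel_prod P \<phi> n x = 1"
  using kernel_prod_skip[OF assms(1) order.refl assms(2)] mpow_row_sum[OF assms(1)] by simp

definition class_weight :: "nat \<Rightarrow> ('a \<Rightarrow> real) \<Rightarrow> nat \<Rightarrow> nat \<Rightarrow> 'a \<Rightarrow> real" where
  "class_weight L \<psi> r i x = (if i mod L = r then \<psi> x else 1)"

lemma kernel_prod_class_zero_short:
  assumes "stochastic P" and "0 < n" and "n \<le> L"
  shows "kernel_prod P (class_weight L \<psi> 0) n x = \<psi> x"
proof -
  obtain n' where n': "n = Suc n'" using assms(2) by (cases n) auto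
  have "kernel_prod P (\<lambda>i. class_weight L \<psi> 0 (Suc i)) n' y = 1" for y
    using assms(3) n' by (intro kernel_prod_ones[OF assms(1)]) (simp add: class_weight_def)
  then show ?thesis using assms(1) n' by (simp add: class_weight_def stochastic_def)
qed

lemma kernel_prod_class_zero_long:
  assumes "stochastic P" and "0 < L" and "L < n"
  shows "kernel_prod P (class_weight L \<psi> 0) n x
       = \<psi> x * (\<Sum>z\<in>UNIV. mpow P L x z * kernel_prod P (class_weight L \<psi> 0) (n - L) z)"
proof -
  obtain n' where n': "n = Suc n'" using assms(3) by (cases n) auto
  have L: "Suc (L - 1) = L" using assms(2) by simp
  have period: "(\<lambda>i. class_weight L \<psi> 0 (Suc (i + (L - 1)))) = class_weight L \<psi> 0"
    using L by (simp add: class_weight_def fun_eq_iff)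
  have "kernel_prod P (\<lambda>i. class_weight L \<psi> 0 (Suc i)) n' y
      = (\<Sum>z\<in>UNIV. mpow P (L - 1) y z * kernel_prod P (class_weight L \<psi> 0) (n - L) z)" for y
    using kernel_prod_skip[OF assms(1), of "L - 1" n' "\<lambda>i. class_weight L \<psi> 0 (Suc i)"]
      period assms(2,3) n' by (simp add: class_weight_def)
  then have "kernel_prod P (class_weight L \<psi> 0) n x = \<psi> x *
      (\<Sum>y\<in>UNIV. P x y * (\<Sum>z\<in>UNIV. mpow P (L - 1) y z * kernel_prod P (class_weight L \<psi> 0) (n - L) z))"
    using n' by (simp add: class_weight_def)
  then show ?thesis unfolding sum_mult_sum_mpow L .
qed

text \<open>Between two factors \<open>\<psi>\<close> the chain makes \<open>L\<close> steps, after which its law is at most \<open>1 + \<delta>\<close>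
  times \<open>\<pi>\<close>; so each factor after the first contributes at most \<open>(1 + \<delta>) \<pi>(\<psi>)\<close>.\<close>

lemma kernel_prod_class_zero_le:
  assumes "stochastic P" and "\<And>x. 0 \<le> \<psi> x" and "0 < L"
    and "\<And>x y. mpow P L x y \<le> (1 + \<delta>) * \<pi> y" and "0 < n"
  shows "kernel_prod P (class_weight L \<psi> 0) n x
       \<le> \<psi> x * ((1 + \<delta>) * (\<Sum>y\<in>UNIV. \<pi> y * \<psi> y)) ^ ((n - 1) div L)"
  using assms(5)
proof (induction n arbitrary: x rule: less_induct)
  case (less n)
  define \<rho> where "\<rho> = (1 + \<delta>) * (\<Sum>y\<in>UNIV. \<pi> y * \<psi> y)"
  show ?case
  proof (cases "n \<le> L")
    case True
    then have "(n - 1) div L = 0" using less.prems by simp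
    then show ?thesis using kernel_prod_class_zero_short[OF assms(1) less.prems True] by simp
  next
    case False
    have "(\<Sum>z\<in>UNIV. mpow P L x z * kernel_prod P (class_weight L \<psi> 0) (n - L) z)
        \<le> (\<Sum>z\<in>UNIV. ((1 + \<delta>) * \<pi> z) * (\<psi> z * \<rho> ^ ((n - L - 1) div L)))"
    proof (intro sum_mono mult_mono)
      fix z
      show "kernel_prod P (class_weight L \<psi> 0) (n - L) z \<le> \<psi> z * \<rho> ^ ((n - L - 1) div L)"
        unfolding \<rho>_def using False assms(3) by (intro less.IH) auto
      show "0 \<le> (1 + \<delta>) * \<pi> z" using order_trans[OF mpow_nonneg[OF assms(1)] assms(4)] .
      show "0 \<le> kernel_prod P (class_weight L \<psi> 0) (n - L) z"
        using assms(2) by (intro kernel_prod_nonneg[OF assms(1)]) (simp add: class_weight_def)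
    qed (rule assms(4))
    also have "\<dots> = \<rho> * \<rho> ^ ((n - L - 1) div L)"
      unfolding \<rho>_def sum_distrib_right sum_distrib_left by (rule sum.cong) (simp_all add: mult_ac)
    also have "\<dots> = \<rho> ^ ((n - 1) div L)"
    proof -
      have "n - 1 = (n - L - 1) + L" using False by linarith
      then have "(n - 1) div L = Suc ((n - L - 1) div L)"
        using div_add_self2[of L "n - L - 1"] assms(3) by (simp only:)
      then show ?thesis by (simp only: power_Suc)
    qed
    finally have "(\<Sum>z\<in>UNIV. mpow P L x z * kernel_prod P (class_weight L \<psi> 0) (n - L) z)
        \<le> \<rho> ^ ((n - 1) div L)" .
    then show ?thesis
      using kernel_prod_class_zero_long[OF assms(1,3), of n] False assms(2)[of x]
      unfolding \<rho>_def by (simp add: mult_left_mono)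
  qed
qed

lemma mod_add_eq_iff_mod_eq_0: "r < (L::nat) \<Longrightarrow> ((i + r) mod L = r) = (i mod L = 0)"
  by (metis add_right_cancel div_mod_decomp mod_add_cong mod_less mod_mult_self2_is_0)

lemma kernel_prod_class_shift:
  assumes "stochastic P" and "r < L" and "r \<le> n"
  shows "kernel_prod P (class_weight L \<psi> r) n x
       = (\<Sum>z\<in>UNIV. mpow P r x z * kernel_prod P (class_weight L \<psi> 0) (n - r) z)"
proof -
  have "(\<lambda>i. class_weight L \<psi> r (i + r)) = class_weight L \<psi> 0"
    by (simp add: fun_eq_iff class_weight_def mod_add_eq_iff_mod_eq_0[OF assms(2)])
  then show ?thesis
    using kernel_prod_skip[OF assms(1,3), of "class_weight L \<psi> r"] assms(2)
    by (simp add: class_weight_def)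
qed

lemma kernel_prod_class_le:
  assumes "stochastic P" and "distribution \<nu>" and "\<And>x. 0 \<le> \<psi> x" and "\<And>x. \<psi> x \<le> 2"
    and "\<And>x y. mpow P L x y \<le> (1 + \<delta>) * \<pi> y"
    and "0 \<le> (1 + \<delta>) * (\<Sum>y\<in>UNIV. \<pi> y * \<psi> y)" and "(1 + \<delta>) * (\<Sum>y\<in>UNIV. \<pi> y * \<psi> y) \<le> 1"
    and "L \<le> n" and "r < L"
  shows "(\<Sum>x\<in>UNIV. \<nu> x * kernel_prod P (class_weight L \<psi> r) n x)
       \<le> 2 * ((1 + \<delta>) * (\<Sum>y\<in>UNIV. \<pi> y * \<psi> y)) ^ (n div L - 1)"
proof -
  define C where "C = 2 * ((1 + \<delta>) * (\<Sum>y\<in>UNIV. \<pi> y * \<psi> y)) ^ (n div L - 1)"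
  have "n div L - 1 \<le> (n - r - 1) div L"
    using assms(8,9) div_le_mono[of "n - L" "n - r - 1" L] div_add_self2[of L "n - L"] by simp
  then have bound: "kernel_prod P (class_weight L \<psi> 0) (n - r) z \<le> C" for z
  proof -
    have "kernel_prod P (class_weight L \<psi> 0) (n - r) z
        \<le> \<psi> z * ((1 + \<delta>) * (\<Sum>y\<in>UNIV. \<pi> y * \<psi> y)) ^ ((n - r - 1) div L)"
      using assms(8,9) by (intro kernel_prod_class_zero_le[OF assms(1,3) _ assms(5)]) auto
    also have "\<dots> \<le> C"
      unfolding C_def using \<open>n div L - 1 \<le> (n - r - 1) div L\<close> assms(3,4,6,7)
      by (intro mult_mono power_decreasing) auto
    finally show ?thesis .
  qed
  have "(\<Sum>x\<in>UNIV. \<nu> x * kernel_prod P (class_weight L \<psi> r) n x)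
      = (\<Sum>x\<in>UNIV. \<nu> x * (\<Sum>z\<in>UNIV. mpow P r x z * kernel_prod P (class_weight L \<psi> 0) (n - r) z))"
    using kernel_prod_class_shift[OF assms(1,9)] assms(8,9) by simp
  also have "\<dots> \<le> (\<Sum>x\<in>UNIV. \<nu> x * (\<Sum>z\<in>UNIV. mpow P r x z * C))"
    using assms(2) by (intro sum_mono mult_left_mono bound mpow_nonneg[OF assms(1)])
      (auto simp: distribution_def)
  also have "\<dots> = C"
    using assms(2) mpow_row_sum[OF assms(1)]
    by (simp add: sum_distrib_right[symmetric] sum_distrib_left[symmetric] distribution_def)
  finally show ?thesis unfolding C_def .
qed

lemma abs_le_tv_dist:
  assumes "sum \<mu> UNIV = sum \<mu>' UNIV"
  shows "\<bar>\<mu> y - \<mu>' y\<bar> \<le> tv_dist \<mu> \<mu>'"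
proof -
  have "\<mu> y - \<mu>' y = - (\<Sum>z\<in>UNIV - {y}. \<mu> z - \<mu>' z)"
    using assms sum.remove[of UNIV y \<mu>] sum.remove[of UNIV y \<mu>'] by (simp add: sum_subtractf)
  then have "\<bar>\<mu> y - \<mu>' y\<bar> = \<bar>\<Sum>z\<in>UNIV - {y}. \<mu> z - \<mu>' z\<bar>" by simp
  also have "\<dots> \<le> (\<Sum>z\<in>UNIV - {y}. \<bar>\<mu> z - \<mu>' z\<bar>)" by (rule sum_abs)
  finally show ?thesis
    using sum.remove[of UNIV y "\<lambda>z. \<bar>\<mu> z - \<mu>' z\<bar>"] by (simp add: tv_dist_def)
qed

lemma sum_diff_mult_diff:
  fixes a b c :: "'b \<Rightarrow> real"
  shows "(\<Sum>z\<in>A. (a z - b z) * (c z - d))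
       = (\<Sum>z\<in>A. a z * c z) - (\<Sum>z\<in>A. b z * c z) - d * sum a A + d * sum b A"
proof -
  have "(\<Sum>z\<in>A. (a z - b z) * (c z - d)) = (\<Sum>z\<in>A. (a z * c z - b z * c z) - (d * a z - d * b z))"
    by (rule sum.cong) (simp_all add: algebra_simps)
  then show ?thesis by (simp only: sum_subtractf sum_distrib_left)
qed

lemma mpow_add_minus_invariant:
  assumes "stochastic P" and "invariant P \<pi>"
  shows "mpow P (t + s) x y - \<pi> y = (\<Sum>z\<in>UNIV. (mpow P t x z - \<pi> z) * (mpow P s z y - \<pi> y))"
  using assms mpow_row_sum[OF assms(1)] invariant_mpow[OF assms(2)]
  by (simp add: sum_diff_mult_diff mpow_add invariant_def distribution_def)

lemma tv_dist_mpow_add_le: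
  assumes "stochastic P" and "invariant P \<pi>" and "\<And>z. tv_dist (mpow P s z) \<pi> \<le> 1/4"
  shows "tv_dist (mpow P (t + s) x) \<pi> \<le> tv_dist (mpow P t x) \<pi> / 2"
proof -
  have "tv_dist (mpow P (t + s) x) \<pi>
      = (\<Sum>y\<in>UNIV. \<bar>\<Sum>z\<in>UNIV. (mpow P t x z - \<pi> z) * (mpow P s z y - \<pi> y)\<bar>) / 2"
    unfolding tv_dist_def mpow_add_minus_invariant[OF assms(1,2)] by simp
  also have "\<dots> \<le> (\<Sum>y\<in>UNIV. \<Sum>z\<in>UNIV. \<bar>mpow P t x z - \<pi> z\<bar> * \<bar>mpow P s z y - \<pi> y\<bar>) / 2"
    by (intro divide_right_mono sum_mono) (simp_all add: abs_mult[symmetric] sum_abs)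
  also have "\<dots> = (\<Sum>z\<in>UNIV. \<bar>mpow P t x z - \<pi> z\<bar> * tv_dist (mpow P s z) \<pi>)"
    unfolding tv_dist_def sum_distrib_left by (subst sum.swap) (simp add: sum_divide_distrib)
  also have "\<dots> \<le> (\<Sum>z\<in>UNIV. \<bar>mpow P t x z - \<pi> z\<bar> * (1/4))"
    by (intro sum_mono mult_left_mono assms(3)) simp
  also have "\<dots> = tv_dist (mpow P t x) \<pi> / 2"
    unfolding tv_dist_def by (simp add: sum_distrib_right)
  finally show ?thesis .
qed

lemma mixes_within_tv_dist_le: "mixes_within P \<pi> T \<Longrightarrow> tv_dist (mpow P T z) \<pi> \<le> 1/4"
  unfolding mixes_within_def by (rule order_trans[rotated]) (auto intro: Max_ge)

lemma tv_dist_mpow_mult_le: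
  assumes "stochastic P" and "invariant P \<pi>" and "mixes_within P \<pi> T"
  shows "tv_dist (mpow P (Suc j * T) x) \<pi> \<le> (1/2) ^ (j + 2)"
proof (induction j arbitrary: x)
  case 0
  then show ?case using mixes_within_tv_dist_le[OF assms(3)] by (simp add: power2_eq_square)
next
  case (Suc j)
  have "tv_dist (mpow P (Suc (Suc j) * T) x) \<pi> = tv_dist (mpow P (Suc j * T + T) x) \<pi>"
    by (simp add: algebra_simps)
  also have "\<dots> \<le> tv_dist (mpow P (Suc j * T) x) \<pi> / 2"
    using assms mixes_within_tv_dist_le by (intro tv_dist_mpow_add_le) auto
  also have "\<dots> \<le> (1/2) ^ Suc (j + 2)" using Suc.IH[of x] by simp
  finally show ?case by simp
qed

lemma mpow_mult_le_invariant_add: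
  assumes "stochastic P" and "invariant P \<pi>" and "mixes_within P \<pi> T"
    and "0 < q" and "- log 2 q \<le> real j" and "1 \<le> j"
  shows "mpow P (j * T) x y \<le> \<pi> y + q / 2"
proof -
  obtain i where j: "j = Suc i" using assms(6) by (cases j) auto
  have "sum (mpow P (j * T) x) UNIV = sum \<pi> UNIV"
    using assms(2) mpow_row_sum[OF assms(1)] by (simp add: invariant_def distribution_def)
  then have "\<bar>mpow P (j * T) x y - \<pi> y\<bar> \<le> tv_dist (mpow P (j * T) x) \<pi>" by (rule abs_le_tv_dist)
  also have "\<dots> \<le> (1/2) ^ j / 2"
    using tv_dist_mpow_mult_le[OF assms(1-3), of i x] j by simp
  also have "(1/2 :: real) ^ j = 2 powr (- real j)"
    by (simp add: powr_minus powr_realpow power_one_over inverse_eq_divide)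
  also have "\<dots> \<le> 2 powr (log 2 q)" using assms(5) by simp
  also have "\<dots> = q" using assms(4) by simp
  finally show ?thesis by linarith
qed

lemma mixes_within_mixing_time: "\<exists>m. mixes_within P \<pi> m \<Longrightarrow> mixes_within P \<pi> (mixing_time P \<pi>)"
  unfolding mixing_time_def by (rule LeastI_ex)

lemma sum_mod_classes:
  assumes "0 < (L::nat)"
  shows "(\<Sum>r<L. \<Sum>i<n. if i mod L = r then g i else 0) = (\<Sum>i<n. g i :: real)"
proof -
  have "(\<Sum>r<L. \<Sum>i<n. if i mod L = r then g i else 0) = (\<Sum>i<n. \<Sum>r<L. if i mod L = r then g i else 0)"
    by (rule sum.swap)
  also have "\<dots> = (\<Sum>i<n. g i)"
    using assms by (intro sum.cong) (simp_all add: sum.delta)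
  finally show ?thesis .
qed

text \<open>The exponents of the \<open>L\<close> class products sum to \<open>\<mu> (\<Sum>f - n\<gamma>) \<ge> 0\<close>, and \<open>exp s \<ge> 1 + s\<close>.\<close>

lemma mean_class_exp_ge_1:
  assumes "0 < L" and "0 \<le> \<mu>" and "real n * \<gamma> \<le> (\<Sum>i<n. f (xs ! i))"
  shows "1 \<le> (\<Sum>r<L. \<Prod>i<n. class_weight L (\<lambda>x. exp (\<mu> * (f x - \<gamma>))) r i (xs ! i)) / real L"
proof -
  define s where "s r = (\<Sum>i<n. if i mod L = r then \<mu> * (f (xs ! i) - \<gamma>) else 0)" for r
  have prod_eq: "(\<Prod>i<n. class_weight L (\<lambda>x. exp (\<mu> * (f x - \<gamma>))) r i (xs ! i)) = exp (s r)" for r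
    unfolding s_def exp_sum[OF finite_lessThan] by (rule prod.cong) (simp_all add: class_weight_def)
  have "(\<Sum>r<L. s r) = (\<Sum>i<n. \<mu> * (f (xs ! i) - \<gamma>))"
    unfolding s_def by (rule sum_mod_classes[OF assms(1)])
  also have "\<dots> = \<mu> * ((\<Sum>i<n. f (xs ! i)) - real n * \<gamma>)"
    by (simp add: sum_distrib_left sum_subtractf algebra_simps)
  finally have "0 \<le> (\<Sum>r<L. s r)" using assms(2,3) by simp
  then have "real L \<le> (\<Sum>r<L. 1 + s r)" by (simp add: sum.distrib)
  also have "\<dots> \<le> (\<Sum>r<L. exp (s r))" by (intro sum_mono exp_ge_add_one_self)
  finally show ?thesis unfolding prod_eq using assms(1) by simp
qed

lemma chain_prob_le_class_bound:
  assumes "stochastic P" and "distribution \<nu>" and "0 < L" and "0 \<le> \<mu>"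
    and "\<And>r. r < L \<Longrightarrow>
      (\<Sum>x\<in>UNIV. \<nu> x * kernel_prod P (class_weight L (\<lambda>x. exp (\<mu> * (f x - \<gamma>))) r) n x) \<le> C"
  shows "chain_prob \<nu> P n (\<lambda>xs. (\<Sum>i<n. f (xs ! i)) \<ge> real n * \<gamma>) \<le> C"
proof -
  define \<psi> where "\<psi> = (\<lambda>x. exp (\<mu> * (f x - \<gamma>)))"
  define G where "G xs = (\<Sum>r<L. \<Prod>i<n. class_weight L \<psi> r i (xs ! i)) / real L" for xs
  define A where "A = {xs :: 'a list. length xs = n}"
  have indicator_le: "(if (\<Sum>i<n. f (xs ! i)) \<ge> real n * \<gamma> then path_prob \<nu> P xs else 0)
      \<le> path_prob \<nu> P xs * G xs" for xs
  proof (cases "(\<Sum>i<n. f (xs ! i)) \<ge> real n * \<gamma>")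
    case True
    then have "1 \<le> G xs" unfolding G_def \<psi>_def by (rule mean_class_exp_ge_1[OF assms(3,4)])
    then show ?thesis
      using True path_prob_nonneg[OF assms(2,1), of xs] by (simp add: mult_le_cancel_left1)
  next
    case False
    have "0 \<le> G xs"
      unfolding G_def class_weight_def \<psi>_def by (intro divide_nonneg_nonneg sum_nonneg prod_nonneg) auto
    then show ?thesis using False path_prob_nonneg[OF assms(2,1), of xs] by simp
  qed
  have "chain_prob \<nu> P n (\<lambda>xs. (\<Sum>i<n. f (xs ! i)) \<ge> real n * \<gamma>)
      = (\<Sum>xs\<in>A. if (\<Sum>i<n. f (xs ! i)) \<ge> real n * \<gamma> then path_prob \<nu> P xs else 0)"
    unfolding chain_prob_def A_def
    by (subst sum.inter_filter[symmetric]) (simp_all add: finite_lists_length_eq_UNIV conj_commute)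
  also have "\<dots> \<le> (\<Sum>xs\<in>A. path_prob \<nu> P xs * G xs)"
    by (intro sum_mono indicator_le)
  also have "\<dots> = (\<Sum>r<L. path_expectation \<nu> P n (\<lambda>xs. \<Prod>i<n. class_weight L \<psi> r i (xs ! i))) / real L"
    unfolding path_expectation_def G_def A_def
    by (simp add: sum_distrib_left sum_divide_distrib mult_ac) (rule sum.swap)
  also have "\<dots> = (\<Sum>r<L. \<Sum>x\<in>UNIV. \<nu> x * kernel_prod P (class_weight L \<psi> r) n x) / real L"
    using path_expectation_prod[OF assms(1)] assms(2) by (simp add: distribution_def)
  also have "\<dots> \<le> (\<Sum>r<L. C) / real L"
    by (intro divide_right_mono sum_mono) (use assms(5) in \<open>auto simp: \<psi>_def\<close>)
  also have "\<dots> = C" using assms(3) by simp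
  finally show ?thesis .
qed

lemma exp_le_quadratic:
  fixes u :: real
  assumes "\<bar>u\<bar> \<le> 1/2"
  shows "exp u \<le> 1 + u + (2/3) * u\<^sup>2"
proof -
  obtain t where t: "\<bar>t\<bar> \<le> \<bar>u\<bar>"
    and taylor: "exp u = (\<Sum>m<3. u ^ m / fact m) + exp t / fact 3 * u ^ 3"
    using Maclaurin_exp_le[of u 3] by blast
  have "exp t \<le> 2"
    using t assms exp_half_le2 order_trans[of "exp t" "exp (1/2)" 2] by simp
  have "exp t / fact 3 * u ^ 3 \<le> \<bar>exp t / fact 3 * u ^ 3\<bar>" by (rule abs_ge_self)
  also have "\<dots> = exp t / 6 * (\<bar>u\<bar> * u\<^sup>2)"
    by (simp add: abs_mult power_abs eval_nat_numeral power2_eq_square fact_numeral)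
  also have "\<dots> \<le> 2 / 6 * (1/2 * u\<^sup>2)"
    using \<open>exp t \<le> 2\<close> assms by (intro mult_mono divide_right_mono) auto
  finally have "exp t / fact 3 * u ^ 3 \<le> u\<^sup>2 / 6" by simp
  moreover have "(\<Sum>m<3. u ^ m / fact m) = 1 + u + u\<^sup>2 / 2"
    by (simp add: eval_nat_numeral power2_eq_square)
  ultimately show ?thesis using taylor by simp
qed

lemma invariant_exp_moment_le:
  assumes "distribution \<pi>" and "\<And>x. \<bar>f x\<bar> \<le> 1" and "(\<Sum>x\<in>UNIV. \<pi> x * f x) = 0"
    and "(\<Sum>x\<in>UNIV. \<pi> x * (f x)\<^sup>2) \<le> v" and "0 \<le> \<mu>" and "\<mu> \<le> 1/2"
  shows "(\<Sum>x\<in>UNIV. \<pi> x * exp (\<mu> * (f x - \<gamma>))) \<le> exp (2/3 * \<mu>\<^sup>2 * v - \<mu> * \<gamma>)"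
proof -
  have \<pi>: "\<And>x. 0 \<le> \<pi> x" "sum \<pi> UNIV = 1" using assms(1) by (auto simp: distribution_def)
  have quadratic: "exp (\<mu> * f x) \<le> 1 + \<mu> * f x + 2/3 * (\<mu>\<^sup>2 * (f x)\<^sup>2)" for x
  proof -
    have "\<bar>\<mu> * f x\<bar> \<le> 1/2 * 1"
      unfolding abs_mult using assms(2,5,6) by (intro mult_mono) auto
    then show ?thesis using exp_le_quadratic[of "\<mu> * f x"] by (simp add: power_mult_distrib)
  qed
  have "(\<Sum>x\<in>UNIV. \<pi> x * exp (\<mu> * (f x - \<gamma>))) = exp (- \<mu> * \<gamma>) * (\<Sum>x\<in>UNIV. \<pi> x * exp (\<mu> * f x))"
    unfolding sum_distrib_left by (rule sum.cong) (simp_all add: exp_add[symmetric] algebra_simps)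
  also have "(\<Sum>x\<in>UNIV. \<pi> x * exp (\<mu> * f x))
      \<le> (\<Sum>x\<in>UNIV. \<pi> x * (1 + \<mu> * f x + 2/3 * (\<mu>\<^sup>2 * (f x)\<^sup>2)))"
    by (intro sum_mono mult_left_mono quadratic \<pi>)
  also have "\<dots> = sum \<pi> UNIV + \<mu> * (\<Sum>x\<in>UNIV. \<pi> x * f x) + 2/3 * \<mu>\<^sup>2 * (\<Sum>x\<in>UNIV. \<pi> x * (f x)\<^sup>2)"
    by (simp add: algebra_simps sum.distrib sum_distrib_left)
  also have "\<dots> \<le> 1 + 2/3 * \<mu>\<^sup>2 * v"
    using \<pi>(2) assms(3,4) by (simp add: mult_left_mono)
  also have "\<dots> \<le> exp (2/3 * \<mu>\<^sup>2 * v)" by (rule exp_ge_add_one_self)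
  finally show ?thesis by (simp add: mult_left_mono exp_add[symmetric])
qed

lemma invariant_block_factor_le:
  assumes "distribution \<pi>" and "\<And>x. \<bar>f x\<bar> \<le> 1" and "(\<Sum>x\<in>UNIV. \<pi> x * f x) = 0"
    and "(\<Sum>x\<in>UNIV. \<pi> x * (f x)\<^sup>2) \<le> v" and "0 < \<gamma>" and "\<gamma> \<le> v"
  shows "(1 + \<gamma>\<^sup>2 / v / 12) * (\<Sum>y\<in>UNIV. \<pi> y * exp (\<gamma> / (2 * v) * (f y - \<gamma>)))
       \<le> exp (- (\<gamma>\<^sup>2 / v) / 4)"
proof -
  define a where "a = \<gamma>\<^sup>2 / v"
  define \<mu> where "\<mu> = \<gamma> / (2 * v)"
  have "0 < v" and "0 < a" and "0 \<le> \<mu>" and "\<mu> \<le> 1/2"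
    using assms(5,6) by (auto simp: a_def \<mu>_def)
  have "2/3 * \<mu>\<^sup>2 * v - \<mu> * \<gamma> = - a / 3"
    using \<open>0 < v\<close> by (simp add: a_def \<mu>_def field_simps power2_eq_square)
  then have "(\<Sum>y\<in>UNIV. \<pi> y * exp (\<mu> * (f y - \<gamma>))) \<le> exp (- a / 3)"
    using invariant_exp_moment_le[OF assms(1-4) \<open>0 \<le> \<mu>\<close> \<open>\<mu> \<le> 1/2\<close>, of \<gamma>] by simp
  then have "(1 + a / 12) * (\<Sum>y\<in>UNIV. \<pi> y * exp (\<mu> * (f y - \<gamma>))) \<le> exp (a / 12) * exp (- a / 3)"
    using \<open>0 < a\<close> assms(1) exp_ge_add_one_self[of "a / 12"]
    by (intro mult_mono) (auto simp: distribution_def intro!: sum_nonneg)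
  then show ?thesis unfolding a_def[symmetric] \<mu>_def[symmetric] by (simp add: exp_add[symmetric])
qed

lemma chain_prob_deviation_le_exp:
  assumes "stochastic P" and "distribution \<nu>" and "invariant P \<pi>"
    and "\<And>x. \<bar>f x\<bar> \<le> 1" and "(\<Sum>x\<in>UNIV. \<pi> x * f x) = 0" and "(\<Sum>x\<in>UNIV. \<pi> x * (f x)\<^sup>2) \<le> v"
    and "0 < \<gamma>" and "\<gamma> \<le> v" and "0 < L" and "L \<le> n"
    and "\<And>x y. mpow P L x y \<le> (1 + \<gamma>\<^sup>2 / (12 * v)) * \<pi> y"
  shows "chain_prob \<nu> P n (\<lambda>xs. (\<Sum>i<n. f (xs ! i)) \<ge> real n * \<gamma>)
       \<le> 2 * exp (- real (n div L - 1) * \<gamma>\<^sup>2 / (4 * v))"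
proof -
  define a where "a = \<gamma>\<^sup>2 / v"
  define \<mu> where "\<mu> = \<gamma> / (2 * v)"
  define \<rho> where "\<rho> = (1 + a / 12) * (\<Sum>y\<in>UNIV. \<pi> y * exp (\<mu> * (f y - \<gamma>)))"
  have \<pi>: "distribution \<pi>" using assms(3) by (simp add: invariant_def)
  have "0 < a" and "0 \<le> \<mu>" and "\<mu> \<le> 1/2" using assms(7,8) by (auto simp: a_def \<mu>_def)
  have \<rho>_le: "\<rho> \<le> exp (- a / 4)"
    unfolding \<rho>_def a_def \<mu>_def by (rule invariant_block_factor_le[OF \<pi> assms(4-8)])
  have "0 \<le> \<rho>"
    unfolding \<rho>_def using \<open>0 < a\<close> \<pi>
    by (auto simp: distribution_def intro!: mult_nonneg_nonneg sum_nonneg)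
  have "\<rho> \<le> 1" using \<rho>_le \<open>0 < a\<close> by (simp add: order_trans[OF \<rho>_le])
  have exp_le_2: "exp (\<mu> * (f x - \<gamma>)) \<le> 2" for x
  proof -
    have "\<mu> * (f x - \<gamma>) \<le> \<mu> * 1"
      using \<open>0 \<le> \<mu>\<close> assms(4)[of x] assms(7) by (intro mult_left_mono) (auto simp: abs_le_iff)
    then have "exp (\<mu> * (f x - \<gamma>)) \<le> exp (1/2)" using \<open>\<mu> \<le> 1/2\<close> by simp
    then show ?thesis using exp_half_le2 by linarith
  qed
  have mpow_le: "mpow P L x y \<le> (1 + a / 12) * \<pi> y" for x y
    using assms(11)[of x y] by (simp add: a_def ac_simps)
  have "chain_prob \<nu> P n (\<lambda>xs. (\<Sum>i<n. f (xs ! i)) \<ge> real n * \<gamma>) \<le> 2 * \<rho> ^ (n div L - 1)"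
  proof (rule chain_prob_le_class_bound[OF assms(1,2,9) \<open>0 \<le> \<mu>\<close>])
    fix r assume "r < L"
    with \<open>0 \<le> \<rho>\<close> \<open>\<rho> \<le> 1\<close> show "(\<Sum>x\<in>UNIV. \<nu> x *
        kernel_prod P (class_weight L (\<lambda>x. exp (\<mu> * (f x - \<gamma>))) r) n x) \<le> 2 * \<rho> ^ (n div L - 1)"
      unfolding \<rho>_def using assms(10) exp_le_2 mpow_le
      by (intro kernel_prod_class_le[OF assms(1,2)]) simp_all
  qed
  also have "\<dots> \<le> 2 * exp (- a / 4) ^ (n div L - 1)"
    using \<rho>_le \<open>0 \<le> \<rho>\<close> by (simp add: power_mono)
  also have "\<dots> = 2 * exp (- real (n div L - 1) * \<gamma>\<^sup>2 / (4 * v))"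
    by (simp add: exp_of_nat_mult[symmetric] a_def)
  finally show ?thesis .
qed

lemma neg_log2_ge_3: "0 < q \<Longrightarrow> q \<le> 1/8 \<Longrightarrow> 3 \<le> - log 2 q"
proof -
  assume "0 < q" and "q \<le> 1/8"
  then have "log 2 q \<le> log 2 (1/8)" by simp
  also have "log 2 (1/8) = (-3 :: real)"
    using log_powr_cancel[of 2 "-3"] by (simp add: powr_minus powr_numeral)
  finally show ?thesis by simp
qed

lemma block_count_ge:
  fixes k :: real and F :: int
  assumes "3 \<le> k" and "k \<le> real j" and "real j < k + 1"
    and "1 \<le> F" and "real_of_int F \<le> real n / (k * real T) - 1"
  shows "0 < j * T" and "j * T \<le> n" and "real_of_int F / 6 - 1 \<le> real (n div (j * T) - 1) / 4"
proof -
  have "0 < T" using assms(4,5) by (cases "T = 0") auto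
  then have kT: "0 < k * real T" using assms(1) by simp
  have "2 \<le> real n / (k * real T)" using assms(4,5) by linarith
  then have "2 * (k * real T) \<le> real n" using kT by (simp add: pos_le_divide_eq)
  moreover have "real (j * T) \<le> 2 * (k * real T)"
    using assms(1,3) \<open>0 < T\<close> mult_right_mono[of "real j" "2 * k" "real T"] by simp
  ultimately show L: "j * T \<le> n" by linarith
  show "0 < j * T" using assms(1,2) \<open>0 < T\<close> by simp
  define m where "m = n div (j * T)"
  have "1 \<le> m" unfolding m_def using L \<open>0 < j * T\<close> div_le_mono[OF L, of "j * T"] by simp
  have "real n < (real m + 1) * real (j * T)"
    using mod_less_divisor[OF \<open>0 < j * T\<close>, of n] div_mult_mod_eq[of n "j * T"]
    unfolding m_def by (simp add: algebra_simps flip: of_nat_mult of_nat_add)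
  then have "real n / real (j * T) < real m + 1" using \<open>0 < j * T\<close> by (simp add: field_simps)
  moreover have "real n / (k * real T) \<le> real n / (2 / 3 * real (j * T))"
    using assms(1-3) \<open>0 < T\<close> kT by (intro divide_left_mono) auto
  ultimately have "real_of_int F < 3 / 2 * (real m + 1) - 1"
    using assms(5) by (simp add: field_simps)
  moreover have "real (m - 1) = real m - 1" using \<open>1 \<le> m\<close> by simp
  ultimately show "real_of_int F / 6 - 1 \<le> real (n div (j * T) - 1) / 4"
    unfolding m_def[symmetric] by (simp add: field_simps)
qed

lemma chain_prob_deviation_le_floor:
  fixes F :: int
  assumes "stochastic P" and "distribution \<nu>" and "invariant P \<pi>"
    and "\<And>x. \<bar>f x\<bar> \<le> 1" and "(\<Sum>x\<in>UNIV. \<pi> x * f x) = 0" and "(\<Sum>x\<in>UNIV. \<pi> x * (f x)\<^sup>2) \<le> v"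
    and "0 < \<gamma>" and "\<gamma> \<le> v" and "\<gamma> \<le> 1/2" and "mixes_within P \<pi> T"
    and "0 < q" and "\<And>y. q \<le> \<pi> y * \<gamma>\<^sup>2 / (6 * v)"
    and "1 \<le> F" and "real_of_int F \<le> real n / (- log 2 q * real T) - 1"
  shows "chain_prob \<nu> P n (\<lambda>xs. (\<Sum>i<n. f (xs ! i)) \<ge> real n * \<gamma>)
       \<le> 4 * exp (- of_int F * \<gamma>\<^sup>2 / (6 * v))"
proof -
  define a where "a = \<gamma>\<^sup>2 / v"
  have "0 < v" and "0 < a" using assms(7,8) by (simp_all add: a_def)
  have "a = \<gamma> * (\<gamma> / v)" by (simp add: a_def power2_eq_square)
  also have "\<dots> \<le> \<gamma> * 1" using assms(7,8) by (intro mult_left_mono) auto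
  finally have "a \<le> 1/2" using assms(9) by simp
  have q_le: "q \<le> \<pi> y * a / 6" for y using assms(12)[of y] by (simp add: a_def)
  have \<pi>a_le: "\<pi> y * a \<le> 1 * (1/2)" for y
    using assms(3) member_le_sum[of y UNIV \<pi>] \<open>0 < a\<close> \<open>a \<le> 1/2\<close>
    by (intro mult_mono) (auto simp: invariant_def distribution_def)
  have "q \<le> 1/8" using q_le[of undefined] \<pi>a_le[of undefined] by linarith
  then have "3 \<le> - log 2 q" by (intro neg_log2_ge_3 assms(11))
  define j where "j = nat \<lceil>- log 2 q\<rceil>"
  have j: "- log 2 q \<le> real j" "real j < - log 2 q + 1" "1 \<le> j"
    using \<open>3 \<le> - log 2 q\<close> unfolding j_def by linarith+
  note blocks = block_count_ge[OF \<open>3 \<le> - log 2 q\<close> j(1,2) assms(13,14)]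
  define m where "m = n div (j * T)"
  have "mpow P (j * T) x y \<le> (1 + \<gamma>\<^sup>2 / (12 * v)) * \<pi> y" for x y
  proof -
    have "mpow P (j * T) x y \<le> \<pi> y + q / 2"
      by (rule mpow_mult_le_invariant_add[OF assms(1,3,10,11) j(1,3)])
    also have "\<dots> \<le> \<pi> y + \<pi> y * a / 12" using q_le[of y] by simp
    also have "\<dots> = (1 + \<gamma>\<^sup>2 / (12 * v)) * \<pi> y" by (simp add: a_def field_simps)
    finally show ?thesis .
  qed
  then have "chain_prob \<nu> P n (\<lambda>xs. (\<Sum>i<n. f (xs ! i)) \<ge> real n * \<gamma>)
      \<le> 2 * exp (- real (m - 1) * \<gamma>\<^sup>2 / (4 * v))"
    unfolding m_def by (rule chain_prob_deviation_le_exp[OF assms(1-8) blocks(1,2)])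
  also have "- real (m - 1) * \<gamma>\<^sup>2 / (4 * v) \<le> a + - of_int F * a / 6"
  proof -
    have "(of_int F / 6 - 1) * a \<le> real (m - 1) / 4 * a"
      using blocks(3) \<open>0 < a\<close> unfolding m_def by (intro mult_right_mono) auto
    then show ?thesis by (simp add: a_def algebra_simps)
  qed
  also have "2 * exp (a + - of_int F * a / 6) \<le> 2 * (2 * exp (- of_int F * a / 6))"
  proof -
    have "exp a \<le> 2" using exp_half_le2 \<open>a \<le> 1/2\<close> order_trans[of "exp a" "exp (1/2)" 2] by simp
    then show ?thesis unfolding exp_add using mult_right_mono[of "exp a" 2] by simp
  qed
  finally show ?thesis by (simp add: a_def ac_simps)
qed

lemma chain_prob_deviation_le_mixing:
  assumes "stochastic P" and "distribution \<nu>" and "invariant P \<pi>"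
    and "\<And>x. \<bar>f x\<bar> \<le> 1" and "(\<Sum>x\<in>UNIV. \<pi> x * f x) = 0" and "(\<Sum>x\<in>UNIV. \<pi> x * (f x)\<^sup>2) \<le> v"
    and "0 < \<gamma>" and "\<gamma> \<le> v" and "\<gamma> \<le> 1/2" and "mixes_within P \<pi> T"
    and "0 \<le> q" and "\<And>y. q \<le> \<pi> y * \<gamma>\<^sup>2 / (6 * v)"
  shows "chain_prob \<nu> P n (\<lambda>xs. (\<Sum>i<n. f (xs ! i)) \<ge> real n * \<gamma>)
       \<le> 4 * exp (- of_int \<lfloor>real n / (- log 2 q * real T) - 1\<rfloor> * \<gamma>\<^sup>2 / (6 * v))"
proof (cases "\<lfloor>real n / (- log 2 q * real T) - 1\<rfloor> \<le> 0")
  case True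
  then have "0 \<le> - of_int \<lfloor>real n / (- log 2 q * real T) - 1\<rfloor> * \<gamma>\<^sup>2 / (6 * v)"
    using assms(7,8) by (intro divide_nonneg_pos mult_nonneg_nonneg) auto
  then have "1 \<le> exp (- of_int \<lfloor>real n / (- log 2 q * real T) - 1\<rfloor> * \<gamma>\<^sup>2 / (6 * v))" by simp
  moreover have "chain_prob \<nu> P n (\<lambda>xs. (\<Sum>i<n. f (xs ! i)) \<ge> real n * \<gamma>) \<le> 1"
    by (rule chain_prob_le_1[OF assms(1,2)])
  ultimately show ?thesis by linarith
next
  case False
  have F: "of_int \<lfloor>real n / (- log 2 q * real T) - 1\<rfloor> \<le> real n / (- log 2 q * real T) - 1"
    by (rule of_int_floor_le)
  with False have "0 < real n / (- log 2 q * real T)" by linarith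
  then have "0 < - log 2 q * real T" unfolding zero_less_divide_iff by auto
  then have "0 < q" using assms(11) by (cases "q = 0") (auto simp: log_def)
  from False show ?thesis
    by (intro chain_prob_deviation_le_floor[OF assms(1-10) \<open>0 < q\<close> assms(12) _ F]) simp
qed

theorem theoremA1:
  fixes P :: "'a::finite \<Rightarrow> 'a \<Rightarrow> real" and \<nu> \<pi> f :: "'a \<Rightarrow> real"
    and n :: nat and \<sigma> \<gamma> :: real
  assumes "stochastic P" and "distribution \<nu>" and "invariant P \<pi>"
    and "\<exists>m. mixes_within P \<pi> m"
    and "n \<ge> 1"
    and "\<forall>x. -1 \<le> f x \<and> f x \<le> 1"
    and "(\<Sum>x\<in>UNIV. \<pi> x * f x) = 0"
    and "(\<Sum>x\<in>UNIV. \<pi> x * (f x)\<^sup>2) \<le> \<sigma>\<^sup>2"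
    and "0 < \<gamma>" and "\<gamma> \<le> min (\<sigma>\<^sup>2) (1/2)"
  shows "let T = mixing_time P \<pi>;
             \<pi>\<^sub>s = Min (range \<pi>);
             k = - log 2 (\<pi>\<^sub>s * \<gamma>\<^sup>2 / (6 * \<sigma>\<^sup>2))
         in chain_prob \<nu> P n (\<lambda>xs. (\<Sum>i<n. f (xs ! i)) \<ge> real n * \<gamma>)
            \<le> 4 * exp (- of_int \<lfloor>real n / (k * real T) - 1\<rfloor> * \<gamma>\<^sup>2 / (6 * \<sigma>\<^sup>2))"
proof -
  define \<pi>\<^sub>s where "\<pi>\<^sub>s = Min (range \<pi>)"
  have "\<pi>\<^sub>s \<le> \<pi> y" for y unfolding \<pi>\<^sub>s_def by (rule Min_le) auto
  moreover have "0 \<le> \<pi>\<^sub>s"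
    using Min_in[of "range \<pi>"] assms(3) unfolding \<pi>\<^sub>s_def by (auto simp: invariant_def distribution_def)
  ultimately have "\<pi>\<^sub>s * \<gamma>\<^sup>2 / (6 * \<sigma>\<^sup>2) \<le> \<pi> y * \<gamma>\<^sup>2 / (6 * \<sigma>\<^sup>2)" "0 \<le> \<pi>\<^sub>s * \<gamma>\<^sup>2 / (6 * \<sigma>\<^sup>2)" for y
    by (simp_all add: divide_right_mono mult_right_mono)
  with assms mixes_within_mixing_time[OF assms(4)] show ?thesis
    unfolding Let_def \<pi>\<^sub>s_def[symmetric]
    by (intro chain_prob_deviation_le_mixing) (auto simp: abs_le_iff)
qed

end
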